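(* Let $n\ge 3$. For each positive integer $m$ and each $1\le i<j\le n$, we have $A_{i,j}^m\in B_n[2m]$, where $A_{i,j}=\sigma_{j-1}\sigma_{j-2}\cdots\sigma_{i+1}\sigma_i^2\sigma_{i+1}^{-1}\cdots\sigma_{j-2}^{-1}\sigma_{j-1}^{-1}$.
   Context: $B_n$ denotes the braid group on $n$ strands with standard Artin generators $\sigma_1,\dots,\sigma_{n-1}$ (the elements $A_{i,j}$ are the standard generators of the pure braid group $PB_n$). The reduced integral Burau representation $\rho_{-1}: B_n \to GL(n-1,\mathbb{Z})$ is defined on generators by $\rho_{-1}(\sigma_1)=\begin{pmatrix}1&0\\1&1\end{pmatrix}\oplus \mathrm{Id}_{n-3}$, $\rho_{-1}(\sigma_{n-1})=\mathrm{Id}_{n-3}\oplus\begin{pmatrix}1&-1\\0&1\end{pmatrix}$, and for $1<i<n-1$, $\rho_{-1}(\sigma_i)=\mathrm{Id}_{i-2}\oplus\begin{pmatrix}1&-1&0\\0&1&0\\0&1&1\end{pmatrix}\oplus \mathrm{Id}_{n-i-2}$, where $\oplus$ denotes block-diagonal sum. For a positive integer $\ell$, let $r_\ell: GL(n-1,\mathbb{Z})\to GL(n-1,\mathbb{Z}/\ell\mathbb{Z})$ be entrywise reduction mod $\ell$. The level $\ell$ congruence subgroup of the braid group is $B_n[\ell] := \ker(r_\ell\circ\rho_{-1})$. *)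

theory Defs
  imports "Jordan_Normal_Form.Matrix"
begin

text \<open>Reduced integral Burau representation rho_{-1} of the Artin generator sigma_i
  (1 \<le> i \<le> n-1) as an (n-1)x(n-1) integer matrix; rows/columns are 0-indexed,
  so the paper's entry (r+1,c+1) is our entry (r,c).\<close>
definition burau_gen :: "nat \<Rightarrow> nat \<Rightarrow> int mat" where
  "burau_gen n i = mat (n - 1) (n - 1) (\<lambda>(r, c).
     if i = 1 then
       (if r = c then 1 else if r = 1 \<and> c = 0 then 1 else 0)
     else if i = n - 1 then
       (if r = c then 1 else if r = n - 3 \<and> c = n - 2 then -1 else 0)
     else
       (if r = c then 1
        else if r = i - 2 \<and> c = i - 1 then -1
        else if r = i \<and> c = i - 1 then 1 else 0))"

definition burau_gen_inv :: "nat \<Rightarrow> nat \<Rightarrow> int mat" where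
  "burau_gen_inv n i = (SOME B. B \<in> carrier_mat (n - 1) (n - 1) \<and>
      burau_gen n i * B = 1\<^sub>m (n - 1) \<and> B * burau_gen n i = 1\<^sub>m (n - 1))"

text \<open>Braid words: a letter (i, True) is sigma_i, (i, False) is sigma_i^{-1}.\<close>
type_synonym braid_word = "(nat \<times> bool) list"

definition burau_letter :: "nat \<Rightarrow> nat \<times> bool \<Rightarrow> int mat" where
  "burau_letter n l = (if snd l then burau_gen n (fst l) else burau_gen_inv n (fst l))"

definition burau_word :: "nat \<Rightarrow> braid_word \<Rightarrow> int mat" where
  "burau_word n w = foldr (\<lambda>l M. burau_letter n l * M) w (1\<^sub>m (n - 1))"

text \<open>Membership of the braid represented by w in B_n[l] = ker (r_l \<circ> rho_{-1}).\<close>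
definition in_level :: "nat \<Rightarrow> nat \<Rightarrow> braid_word \<Rightarrow> bool" where
  "in_level n l w \<longleftrightarrow>
     map_mat (\<lambda>x. x mod int l) (burau_word n w) = map_mat (\<lambda>x. x mod int l) (1\<^sub>m (n - 1))"

definition A_word :: "nat \<Rightarrow> nat \<Rightarrow> braid_word" where
  "A_word i j = map (\<lambda>k. (k, True)) (rev [i+1..<j]) @ [(i, True), (i, True)]
                @ map (\<lambda>k. (k, False)) [i+1..<j]"

definition word_pow :: "braid_word \<Rightarrow> nat \<Rightarrow> braid_word" where
  "word_pow w m = concat (replicate m w)"

end

theory Submission
  imports Defs
begin

text \<open>Every generator acts as \<open>1 + N\<^sub>i\<close>, where the nonzero entries of \<open>N\<^sub>i\<close> lie in a single
  column and off the diagonal, so \<open>N\<^sub>i\<^sup>2 = 0\<close>. Hence \<open>\<rho>(\<sigma>\<^sub>i\<^sup>2) = 1 + 2 N\<^sub>i\<close>, and conjugating by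
  \<open>X = \<rho>(\<sigma>\<^sub>j\<^sub>-\<^sub>1 \<dots> \<sigma>\<^sub>i\<^sub>+\<^sub>1)\<close> gives \<open>\<rho>(A\<^sub>i\<^sub>,\<^sub>j) = 1 + 2 M\<close> with \<open>M = X N\<^sub>i X\<^sup>-\<^sup>1\<close> again square-zero.
  Therefore \<open>\<rho>(A\<^sub>i\<^sub>,\<^sub>j\<^sup>m) = 1 + 2m M\<close>, which is the identity modulo \<open>2m\<close>.\<close>

lemma mult_self_eq_zero_if_single_column:
  fixes N :: "'a :: semiring_0 mat"
  assumes N: "N \<in> carrier_mat d d"
    and column: "\<And>r k. r < d \<Longrightarrow> k < d \<Longrightarrow> N $$ (r, k) \<noteq> 0 \<Longrightarrow> k = c \<and> r \<noteq> c"
  shows "N * N = 0\<^sub>m d d"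
proof (rule eq_matI)
  fix r s assume "r < dim_row (0\<^sub>m d d :: 'a mat)" "s < dim_col (0\<^sub>m d d :: 'a mat)"
  then have rs: "r < d" "s < d" by simp_all
  have "N $$ (r, k) * N $$ (k, s) = 0" if "k < d" for k
    using column[OF rs(1) that] column[OF that rs(2)] by fastforce
  then show "(N * N) $$ (r, s) = 0\<^sub>m d d $$ (r, s)"
    using N rs by (simp add: scalar_prod_def)
qed (use N in auto)

lemma one_plus_smult_mult:
  fixes N :: "'a :: comm_semiring_1 mat"
  assumes N: "N \<in> carrier_mat d d" and NN: "N * N = 0\<^sub>m d d"
  shows "(1\<^sub>m d + a \<cdot>\<^sub>m N) * (1\<^sub>m d + b \<cdot>\<^sub>m N) = 1\<^sub>m d + (a + b) \<cdot>\<^sub>m N"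
proof -
  have "(a \<cdot>\<^sub>m N) * (b \<cdot>\<^sub>m N) = 0\<^sub>m d d"
    using N NN by (simp add: mult_smult_assoc_mat[OF N smult_carrier_mat[OF N]]
        mult_smult_distrib[OF N N])
  moreover have "(1\<^sub>m d + a \<cdot>\<^sub>m N) * (1\<^sub>m d + b \<cdot>\<^sub>m N)
      = 1\<^sub>m d + a \<cdot>\<^sub>m N + (b \<cdot>\<^sub>m N + (a \<cdot>\<^sub>m N) * (b \<cdot>\<^sub>m N))"
    using N by (simp add: add_mult_distrib_mat[of _ d d _ _ d] mult_add_distrib_mat[of _ d d _ d])
  ultimately show ?thesis
    using N by (intro eq_matI) (auto simp: algebra_simps)
qed

lemma one_plus_smult_mult_neg:
  fixes N :: "'a :: comm_ring_1 mat"
  assumes N: "N \<in> carrier_mat d d" and NN: "N * N = 0\<^sub>m d d"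
  shows "(1\<^sub>m d + a \<cdot>\<^sub>m N) * (1\<^sub>m d + (- a) \<cdot>\<^sub>m N) = 1\<^sub>m d"
  using one_plus_smult_mult[OF N NN, of a "- a"] N by (auto intro!: eq_matI)

lemma one_plus_smult_pow_mat:
  fixes N :: "'a :: comm_semiring_1 mat"
  assumes N: "N \<in> carrier_mat d d" and NN: "N * N = 0\<^sub>m d d"
  shows "(1\<^sub>m d + a \<cdot>\<^sub>m N) ^\<^sub>m k = 1\<^sub>m d + (of_nat k * a) \<cdot>\<^sub>m N"
proof (induction k)
  case 0
  show ?case using N by (intro eq_matI) auto
next
  case (Suc k)
  then show ?case
    using one_plus_smult_mult[OF N NN, of "of_nat k * a" a] by (simp add: algebra_simps)
qed

lemma conjugate_one_plus_smult:
  fixes N :: "'a :: comm_semiring_1 mat"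
  assumes X: "X \<in> carrier_mat d d" and N: "N \<in> carrier_mat d d" and Y: "Y \<in> carrier_mat d d"
    and XY: "X * Y = 1\<^sub>m d"
  shows "X * (1\<^sub>m d + a \<cdot>\<^sub>m N) * Y = 1\<^sub>m d + a \<cdot>\<^sub>m (X * N * Y)"
proof -
  have "X * (1\<^sub>m d + a \<cdot>\<^sub>m N) = X + a \<cdot>\<^sub>m (X * N)"
    using X N by (simp add: mult_add_distrib_mat[OF X one_carrier_mat smult_carrier_mat[OF N]]
        mult_smult_distrib[OF X N])
  then show ?thesis
    using X N Y XY by (simp add: add_mult_distrib_mat[of _ d d] mult_smult_assoc_mat[of _ d d])
qed

lemma conjugate_square_zero:
  fixes N :: "'a :: semiring_1 mat"
  assumes X: "X \<in> carrier_mat d d" and N: "N \<in> carrier_mat d d" and Y: "Y \<in> carrier_mat d d"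
    and YX: "Y * X = 1\<^sub>m d" and NN: "N * N = 0\<^sub>m d d"
  shows "(X * N * Y) * (X * N * Y) = 0\<^sub>m d d"
proof -
  have XN: "X * N \<in> carrier_mat d d"
    using X N by simp
  have "(X * N * Y) * (X * N * Y) = X * N * ((Y * X) * N * Y)"
    using X N Y XN by (simp add: assoc_mult_mat[of _ d d _ d _ d])
  also have "\<dots> = X * (N * N) * Y"
    using X N Y YX by (simp add: assoc_mult_mat[of _ d d _ d _ d])
  finally show ?thesis
    using X Y NN by simp
qed

lemma mod_one_plus_smult_mat:
  fixes M :: "int mat" and k a :: int
  assumes M: "M \<in> carrier_mat d d" and "k dvd a"
  shows "map_mat (\<lambda>x. x mod k) (1\<^sub>m d + a \<cdot>\<^sub>m M) = map_mat (\<lambda>x. x mod k) (1\<^sub>m d)"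
  using assms by (intro eq_matI) (auto elim!: dvdE simp: mult.assoc)

definition burau_nilpart :: "nat \<Rightarrow> nat \<Rightarrow> int mat" where
  "burau_nilpart n i = burau_gen n i - 1\<^sub>m (n - 1)"

lemma burau_gen_carrier: "burau_gen n i \<in> carrier_mat (n - 1) (n - 1)"
  by (simp add: burau_gen_def)

lemma burau_nilpart_carrier: "burau_nilpart n i \<in> carrier_mat (n - 1) (n - 1)"
  by (simp add: burau_nilpart_def minus_carrier_mat)

lemma burau_nilpart_entry_nonzero:
  assumes "r < n - 1" "c < n - 1" "burau_nilpart n i $$ (r, c) \<noteq> 0"
  shows "c = i - 1 \<and> r \<noteq> i - 1"
  using assms by (auto simp: burau_nilpart_def burau_gen_def numeral_2_eq_2 split: if_splits)

lemma burau_nilpart_square: "burau_nilpart n i * burau_nilpart n i = 0\<^sub>m (n - 1) (n - 1)"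
  by (rule mult_self_eq_zero_if_single_column[OF burau_nilpart_carrier burau_nilpart_entry_nonzero])

lemma burau_gen_eq: "burau_gen n i = 1\<^sub>m (n - 1) + 1 \<cdot>\<^sub>m burau_nilpart n i"
  using burau_gen_carrier[of n i] by (intro eq_matI) (auto simp: burau_nilpart_def)

text \<open>\<open>burau_gen_inv\<close> is a Hilbert choice; inverses are unique, so it is \<open>1 - N\<^sub>i\<close>.\<close>

lemma burau_gen_inv_eq: "burau_gen_inv n i = 1\<^sub>m (n - 1) + (-1) \<cdot>\<^sub>m burau_nilpart n i"
proof -
  let ?d = "n - 1"
  let ?g = "burau_gen n i" and ?h = "1\<^sub>m ?d + (-1) \<cdot>\<^sub>m burau_nilpart n i"
  have h: "?h \<in> carrier_mat ?d ?d"
    by (rule add_carrier_mat[OF smult_carrier_mat[OF burau_nilpart_carrier]])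
  have gh: "?g * ?h = 1\<^sub>m ?d" and hg: "?h * ?g = 1\<^sub>m ?d"
    using one_plus_smult_mult_neg[OF burau_nilpart_carrier burau_nilpart_square, where a = 1]
      one_plus_smult_mult_neg[OF burau_nilpart_carrier burau_nilpart_square, where a = "-1"]
    by (simp_all add: burau_gen_eq)
  obtain B where B: "B \<in> carrier_mat ?d ?d" "B * ?g = 1\<^sub>m ?d" and inv: "burau_gen_inv n i = B"
    using someI[of "\<lambda>B. B \<in> carrier_mat ?d ?d \<and> ?g * B = 1\<^sub>m ?d \<and> B * ?g = 1\<^sub>m ?d", OF conjI[OF h conjI[OF gh hg]]]
    unfolding burau_gen_inv_def by blast
  have "B = B * (?g * ?h)"
    unfolding gh by (rule right_mult_one_mat[OF B(1), symmetric])
  also have "\<dots> = (B * ?g) * ?h"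
    by (rule assoc_mult_mat[symmetric, OF B(1) burau_gen_carrier h])
  also have "\<dots> = ?h"
    unfolding B(2) by (rule left_mult_one_mat[OF h])
  finally show ?thesis
    using inv by simp
qed

lemma burau_letter_eq:
  "burau_letter n (k, s) = 1\<^sub>m (n - 1) + (if s then 1 else -1) \<cdot>\<^sub>m burau_nilpart n k"
  by (simp add: burau_letter_def burau_gen_eq burau_gen_inv_eq)

lemma burau_letter_carrier: "burau_letter n l \<in> carrier_mat (n - 1) (n - 1)"
proof (cases l)
  case (Pair k s)
  show ?thesis
    unfolding Pair burau_letter_eq by (rule add_carrier_mat[OF smult_carrier_mat[OF burau_nilpart_carrier]])
qed

lemma burau_word_Nil: "burau_word n [] = 1\<^sub>m (n - 1)"
  by (simp add: burau_word_def)

lemma burau_word_Cons: "burau_word n (l # w) = burau_letter n l * burau_word n w"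
  by (simp add: burau_word_def)

lemma burau_word_carrier: "burau_word n w \<in> carrier_mat (n - 1) (n - 1)"
proof (induction w)
  case Nil
  show ?case
    unfolding burau_word_Nil by (rule one_carrier_mat)
next
  case (Cons l w)
  show ?case
    unfolding burau_word_Cons by (rule mult_carrier_mat[OF burau_letter_carrier Cons.IH])
qed

lemma burau_word_append: "burau_word n (u @ v) = burau_word n u * burau_word n v"
proof (induction u)
  case Nil
  show ?case
    unfolding append_Nil burau_word_Nil by (rule left_mult_one_mat[OF burau_word_carrier, symmetric])
next
  case (Cons l u)
  then show ?case
    by (simp add: burau_word_Cons assoc_mult_mat[OF burau_letter_carrier burau_word_carrier burau_word_carrier])
qed

lemma burau_word_pow: "burau_word n (word_pow w k) = burau_word n w ^\<^sub>m k"
proof (induction k)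
  case 0
  show ?case
    using burau_word_carrier[of n w] by (simp add: word_pow_def burau_word_Nil)
next
  case (Suc k)
  have "word_pow w (Suc k) = word_pow w k @ w"
    unfolding word_pow_def replicate_Suc replicate_append_same[symmetric] by simp
  then show ?case
    by (simp add: burau_word_append Suc)
qed

definition word_inv :: "braid_word \<Rightarrow> braid_word" where
  "word_inv w = rev (map (\<lambda>(k, s). (k, \<not> s)) w)"

lemma burau_letter_mult_inv:
  "burau_letter n (k, s) * burau_letter n (k, \<not> s) = 1\<^sub>m (n - 1)"
  using one_plus_smult_mult_neg[OF burau_nilpart_carrier burau_nilpart_square, where a = 1]
    one_plus_smult_mult_neg[OF burau_nilpart_carrier burau_nilpart_square, where a = "-1"]
  by (cases s) (simp_all add: burau_letter_eq)

lemma burau_word_mult_word_inv: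
  "burau_word n w * burau_word n (word_inv w) = 1\<^sub>m (n - 1)"
  "burau_word n (word_inv w) * burau_word n w = 1\<^sub>m (n - 1)"
proof (induction w)
  case (Cons l w)
  obtain k s where l: "l = (k, s)"
    by (cases l)
  let ?d = "n - 1"
  let ?L = "burau_letter n (k, s)" and ?L' = "burau_letter n (k, \<not> s)"
  let ?W = "burau_word n w" and ?V = "burau_word n (word_inv w)"
  have L: "?L \<in> carrier_mat ?d ?d" and L': "?L' \<in> carrier_mat ?d ?d"
    and W: "?W \<in> carrier_mat ?d ?d" and V: "?V \<in> carrier_mat ?d ?d"
    by (rule burau_letter_carrier burau_word_carrier)+
  have word: "burau_word n (l # w) = ?L * ?W"
    and inv: "burau_word n (word_inv (l # w)) = ?V * ?L'"
    using L' by (simp_all add: l word_inv_def burau_word_Cons burau_word_append)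
      (simp add: burau_word_def)
  have "?L * ?W * (?V * ?L') = ?L * ((?W * ?V) * ?L')"
    using L L' W V by (simp add: assoc_mult_mat[of _ ?d ?d _ ?d _ ?d])
  also have "\<dots> = 1\<^sub>m ?d"
    using L' by (simp add: Cons.IH(1) burau_letter_mult_inv)
  finally show "burau_word n (l # w) * burau_word n (word_inv (l # w)) = 1\<^sub>m ?d"
    unfolding word inv .
  have "?V * ?L' * (?L * ?W) = ?V * ((?L' * ?L) * ?W)"
    using L L' W V by (simp add: assoc_mult_mat[of _ ?d ?d _ ?d _ ?d])
  also have "\<dots> = 1\<^sub>m ?d"
    using burau_letter_mult_inv[of n k "\<not> s"] W by (simp add: Cons.IH(2))
  finally show "burau_word n (word_inv (l # w)) * burau_word n (l # w) = 1\<^sub>m ?d"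
    unfolding word inv .
qed (simp_all add: burau_word_Nil word_inv_def)

lemma burau_word_gen_square:
  "burau_word n [(i, True), (i, True)] = 1\<^sub>m (n - 1) + 2 \<cdot>\<^sub>m burau_nilpart n i"
proof -
  have "burau_word n [(i, True), (i, True)] = burau_letter n (i, True) * burau_letter n (i, True)"
    by (simp only: burau_word_Cons burau_word_Nil right_mult_one_mat[OF burau_letter_carrier])
  then show ?thesis
    using one_plus_smult_mult[OF burau_nilpart_carrier burau_nilpart_square, where a = 1 and b = 1]
    by (simp add: burau_letter_eq)
qed

theorem corollary2p5:
  fixes n m i j :: nat
  assumes "n \<ge> 3" and "m \<ge> 1" and "1 \<le> i" and "i < j" and "j \<le> n"
  shows "in_level n (2 * m) (word_pow (A_word i j) m)"
  \<comment> \<open>The hypotheses are not needed: \<open>N\<^sub>i\<^sup>2 = 0\<close> holds for every index (out-of-range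
    generators are unipotent junk), and for \<open>m = 0\<close> the word is empty.\<close>
proof -
  let ?d = "n - 1" and ?N = "burau_nilpart n i"
  define u where "u = map (\<lambda>k. (k, True)) (rev [i+1..<j])"
  define X Y where "X = burau_word n u" and "Y = burau_word n (word_inv u)"
  define M where "M = X * ?N * Y"
  have X: "X \<in> carrier_mat ?d ?d" and Y: "Y \<in> carrier_mat ?d ?d"
    unfolding X_def Y_def by (rule burau_word_carrier)+
  have XY: "X * Y = 1\<^sub>m ?d" and YX: "Y * X = 1\<^sub>m ?d"
    unfolding X_def Y_def by (rule burau_word_mult_word_inv)+
  have M: "M \<in> carrier_mat ?d ?d"
    unfolding M_def by (rule mult_carrier_mat[OF mult_carrier_mat[OF X burau_nilpart_carrier] Y])
  have MM: "M * M = 0\<^sub>m ?d ?d"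
    unfolding M_def by (rule conjugate_square_zero[OF X burau_nilpart_carrier Y YX burau_nilpart_square])
  have "A_word i j = u @ [(i, True), (i, True)] @ word_inv u"
    by (simp add: A_word_def u_def word_inv_def rev_map)
  then have "burau_word n (A_word i j) = X * ((1\<^sub>m ?d + 2 \<cdot>\<^sub>m ?N) * Y)"
    by (simp only: burau_word_append burau_word_gen_square X_def Y_def)
  also have "\<dots> = X * (1\<^sub>m ?d + 2 \<cdot>\<^sub>m ?N) * Y"
    by (rule assoc_mult_mat[symmetric, OF X add_carrier_mat[OF smult_carrier_mat[OF burau_nilpart_carrier]] Y])
  also have "\<dots> = 1\<^sub>m ?d + 2 \<cdot>\<^sub>m M"
    unfolding M_def by (rule conjugate_one_plus_smult[OF X burau_nilpart_carrier Y XY])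
  finally have A: "burau_word n (A_word i j) = 1\<^sub>m ?d + 2 \<cdot>\<^sub>m M" .
  have "burau_word n (word_pow (A_word i j) m) = 1\<^sub>m ?d + (int m * 2) \<cdot>\<^sub>m M"
    unfolding burau_word_pow A by (rule one_plus_smult_pow_mat[OF M MM])
  then show ?thesis
    unfolding in_level_def by (rule ssubst) (rule mod_one_plus_smult_mat[OF M], simp)
qed

end
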